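(* Let $S_0$ be a nonempty set, let $S$ be the collection of all finite subsets of $S_0$, partially ordered by set inclusion, and let $\mathcal{G}$ be any group acting on $S_0$, with the action extended to $S$ by $Ta = \{Tx : x \in a\}$ for $a \in S$, $T \in \mathcal{G}$. Then on the quotient $S/\mathcal{G}$ (the set of orbits of this action) the strong relation ($A \preceq B$ iff for all $a \in A$ there is $b \in B$ with $a \subseteq b$) and the weak relation ($A \preceq B$ iff there exist $a \in A$, $b \in B$ with $a \subseteq b$) are identical, and this relation is a partial order on $S/\mathcal{G}$. *)

theory Defs
  imports "HOL-Algebra.Group_Action"
begin

definition fin_subsets :: "'b set \<Rightarrow> 'b set set" where
  "fin_subsets S0 = {a. a \<subseteq> S0 \<and> finite a}"

definition set_action :: "('a \<Rightarrow> 'b \<Rightarrow> 'b) \<Rightarrow> 'a \<Rightarrow> 'b set \<Rightarrow> 'b set" where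
  "set_action \<phi> g a = \<phi> g ` a"

definition strong_rel :: "'b set set \<Rightarrow> 'b set set \<Rightarrow> bool" where
  "strong_rel A B \<longleftrightarrow> (\<forall>a\<in>A. \<exists>b\<in>B. a \<subseteq> b)"

definition weak_rel :: "'b set set \<Rightarrow> 'b set set \<Rightarrow> bool" where
  "weak_rel A B \<longleftrightarrow> (\<exists>a\<in>A. \<exists>b\<in>B. a \<subseteq> b)"

end

theory Submission
  imports Defs
begin

text \<open>Since the action of \<open>T\<close> on subsets is monotone for inclusion and an orbit is the orbit of
  any of its members, a single pair \<open>a \<subseteq> b\<close> of representatives transports along the whole orbit
  of \<open>a\<close>; so the weak relation implies the strong one, and the converse holds because orbits are
  nonempty. For antisymmetry,
  \<open>A \<preceq> B \<preceq> A\<close> yields \<open>a \<subseteq> b \<subseteq> T a\<close>; as \<open>T\<close> is injective, \<open>T a\<close> has the same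
  finite cardinality as \<open>a\<close>, which forces \<open>a = b\<close> and hence \<open>A = B\<close>.\<close>

lemma strong_rel_refl: "strong_rel A A"
  unfolding strong_rel_def by blast

lemma strong_rel_trans: "strong_rel A B \<Longrightarrow> strong_rel B C \<Longrightarrow> strong_rel A C"
  unfolding strong_rel_def by (meson order_trans)

lemma strong_rel_imp_weak_rel: "strong_rel A B \<Longrightarrow> A \<noteq> {} \<Longrightarrow> weak_rel A B"
  unfolding strong_rel_def weak_rel_def by blast

context group_action
begin

lemma set_action_mult:
  assumes "a \<subseteq> E" "g \<in> carrier G" "h \<in> carrier G"
  shows "set_action \<phi> h (set_action \<phi> g a) = set_action \<phi> (h \<otimes> g) a"
  using assms composition_rule by (auto simp: set_action_def image_image subset_iff)

lemma set_action_one: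
  assumes "a \<subseteq> E"
  shows "set_action \<phi> \<one> a = a"
proof -
  have "\<phi> \<one> x = x" if "x \<in> E" for x
    using id_eq_one that by (metis restrict_apply')
  with assms show ?thesis
    by (force simp: set_action_def subset_iff image_iff)
qed

lemma card_set_action:
  assumes "a \<subseteq> E" "g \<in> carrier G"
  shows "card (set_action \<phi> g a) = card a"
  unfolding set_action_def using assms inj_prop by (meson card_image inj_on_subset)

lemma orbit_set_action_self: "a \<subseteq> E \<Longrightarrow> a \<in> orbit G (set_action \<phi>) a"
  unfolding orbit_def using set_action_one
  by (metis (mono_tags, lifting) group.is_monoid group_hom group_hom.axioms(1)
      mem_Collect_eq monoid.one_closed)

lemma orbit_set_action_eq:
  assumes "a \<subseteq> E" "b \<in> orbit G (set_action \<phi>) a"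
  shows "orbit G (set_action \<phi>) b = orbit G (set_action \<phi>) a"
proof -
  interpret group G
    using group_hom group_hom.axioms(1) by blast
  obtain g where g: "g \<in> carrier G" "b = set_action \<phi> g a"
    using assms(2) unfolding orbit_def by blast
  have "set_action \<phi> h b = set_action \<phi> (h \<otimes> g) a" if "h \<in> carrier G" for h
    using g assms(1) that set_action_mult by simp
  moreover have "set_action \<phi> h a = set_action \<phi> (h \<otimes> inv g) b" if "h \<in> carrier G" for h
    using g assms(1) that set_action_mult by (simp add: m_assoc)
  ultimately show ?thesis
    unfolding orbit_def using g(1) by (metis (lifting) inv_closed m_closed)
qed

lemma orbits_set_action_member:
  assumes "F \<subseteq> Pow E" "A \<in> orbits G F (set_action \<phi>)" "a \<in> A"
  shows "A = orbit G (set_action \<phi>) a"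
proof -
  obtain a0 where "a0 \<in> F" and A: "A = orbit G (set_action \<phi>) a0"
    using assms(2) unfolding orbits_def by blast
  with assms(1,3) show ?thesis
    using orbit_set_action_eq by blast
qed

lemma orbits_set_action_nonempty:
  "F \<subseteq> Pow E \<Longrightarrow> A \<in> orbits G F (set_action \<phi>) \<Longrightarrow> A \<noteq> {}"
  unfolding orbits_def using orbit_set_action_self by blast

lemma weak_rel_imp_strong_rel:
  assumes "F \<subseteq> Pow E" "A \<in> orbits G F (set_action \<phi>)" "B \<in> orbits G F (set_action \<phi>)"
    and "weak_rel A B"
  shows "strong_rel A B"
  unfolding strong_rel_def
proof
  obtain a b where ab: "a \<in> A" "b \<in> B" "a \<subseteq> b"
    using assms(4) unfolding weak_rel_def by blast
  fix x assume "x \<in> A"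
  then obtain g where "g \<in> carrier G" "x = set_action \<phi> g a"
    using orbits_set_action_member[OF assms(1,2) ab(1)] unfolding orbit_def by blast
  moreover have "set_action \<phi> g b \<in> B" if "g \<in> carrier G" for g
    using orbits_set_action_member[OF assms(1,3) ab(2)] that unfolding orbit_def by blast
  ultimately show "\<exists>y\<in>B. x \<subseteq> y"
    using ab(3) unfolding set_action_def by blast
qed

lemma strong_rel_antisym:
  assumes "F \<subseteq> fin_subsets E" "A \<in> orbits G F (set_action \<phi>)" "B \<in> orbits G F (set_action \<phi>)"
    and "strong_rel A B" "strong_rel B A"
  shows "A = B"
proof -
  have F: "F \<subseteq> Pow E"
    using assms(1) unfolding fin_subsets_def by blast
  obtain a0 where "a0 \<in> F" and A: "A = orbit G (set_action \<phi>) a0"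
    using assms(2) unfolding orbits_def by blast
  then have a0: "a0 \<subseteq> E" "finite a0" "a0 \<in> A"
    using assms(1) orbit_set_action_self unfolding fin_subsets_def by auto
  obtain b where b: "b \<in> B" "a0 \<subseteq> b"
    using assms(4) a0(3) unfolding strong_rel_def by blast
  obtain a' where "a' \<in> A" "b \<subseteq> a'"
    using assms(5) b(1) unfolding strong_rel_def by blast
  then obtain g where g: "g \<in> carrier G" "a' = set_action \<phi> g a0"
    using A unfolding orbit_def by blast
  have "finite a'"
    using g a0(2) unfolding set_action_def by simp
  moreover have "card a' = card a0"
    using g a0(1) card_set_action by simp
  ultimately have "a0 = a'"
    using b(2) \<open>b \<subseteq> a'\<close> card_subset_eq by (metis order_trans)
  then have "a0 = b"
    using b(2) \<open>b \<subseteq> a'\<close> by blast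
  then show ?thesis
    using A orbits_set_action_member[OF F assms(3) b(1)] by simp
qed

end

theorem corollary1:
  fixes G (structure) and S0 :: "'b set" and \<phi> :: "'a \<Rightarrow> 'b \<Rightarrow> 'b"
  assumes "S0 \<noteq> {}"
    and "group_action G S0 \<phi>"
  shows "(\<forall>A\<in>orbits G (fin_subsets S0) (set_action \<phi>).
            \<forall>B\<in>orbits G (fin_subsets S0) (set_action \<phi>).
              strong_rel A B \<longleftrightarrow> weak_rel A B)
       \<and> partial_order_on (orbits G (fin_subsets S0) (set_action \<phi>))
           {(A, B). A \<in> orbits G (fin_subsets S0) (set_action \<phi>)
                  \<and> B \<in> orbits G (fin_subsets S0) (set_action \<phi>) \<and> strong_rel A B}"
proof -
  interpret group_action G S0 \<phi> by (rule assms(2))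
  have F: "fin_subsets S0 \<subseteq> Pow S0"
    unfolding fin_subsets_def by blast
  define Orb where "Orb = orbits G (fin_subsets S0) (set_action \<phi>)"
  have "strong_rel A B \<longleftrightarrow> weak_rel A B" if "A \<in> Orb" "B \<in> Orb" for A B
    using that strong_rel_imp_weak_rel weak_rel_imp_strong_rel[OF F]
      orbits_set_action_nonempty[OF F] unfolding Orb_def by blast
  moreover have "partial_order_on Orb {(A, B). A \<in> Orb \<and> B \<in> Orb \<and> strong_rel A B}"
    unfolding partial_order_on_def preorder_on_def refl_on_def trans_def antisym_def
    using strong_rel_refl strong_rel_trans strong_rel_antisym[OF order_refl]
    unfolding Orb_def by blast
  ultimately show ?thesis
    unfolding Orb_def by blast
qed

end
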